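(* Let $a\geq 2$ be an integer and $m\geq 1$. The number of pyramids of size $m$ made of pieces of length $a$ (with bottom piece covering the interval $]0,a[$) equals $\binom{am-1}{m-1}$.
   Context: Fix an integer $a\geq 2$. A piece is an open interval $]s,s+a[$ of the real line with $s\in\mathbb Z$; two pieces are concurrent iff their intervals intersect. A heap (in the sense of Viennot) is a finite configuration obtained by successively dropping pieces vertically towards the horizontal axis: each dropped piece comes to rest either on the axis or on top of the highest previously placed piece whose interval intersects its own; two dropping orders give the same heap iff they produce the same configuration of placed pieces. Equivalently, a heap is the finite poset of placed pieces ordered by the transitive closure of "$\beta$ lies above $\alpha$ and their intervals intersect". A heap is a pyramid if it has a unique bottom (minimal) piece, i.e. exactly one piece rests on the axis. The size $|p|$ of a pyramid $p$ is its number of pieces. When not otherwise specified, a pyramid is assumed to have its bottom piece covering the interval $]0,a[$. *)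

theory Defs
  imports Main Complex_Main
begin

text \<open>A placed piece is a pair (s, h): the piece is the open interval ]s, s+a[ with
  s an integer, resting at level h (h = 0 means it lies on the horizontal axis).\<close>

definition concurrent :: "nat \<Rightarrow> int \<Rightarrow> int \<Rightarrow> bool" where
  "concurrent a s t \<longleftrightarrow>
     {real_of_int s <..< real_of_int s + real a} \<inter> {real_of_int t <..< real_of_int t + real a} \<noteq> {}"

definition drop_level :: "nat \<Rightarrow> int \<Rightarrow> (int \<times> nat) set \<Rightarrow> nat" where
  "drop_level a s C =
     (if \<exists>p\<in>C. concurrent a s (fst p)
      then Suc (Max {snd p | p. p \<in> C \<and> concurrent a s (fst p)})
      else 0)"

definition drop_piece :: "nat \<Rightarrow> int \<Rightarrow> (int \<times> nat) set \<Rightarrow> (int \<times> nat) set" where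
  "drop_piece a s C = insert (s, drop_level a s C) C"

inductive_set heaps :: "nat \<Rightarrow> (int \<times> nat) set set" for a :: nat where
  empty: "{} \<in> heaps a"
| drop: "C \<in> heaps a \<Longrightarrow> drop_piece a s C \<in> heaps a"

definition pyramid :: "(int \<times> nat) set \<Rightarrow> bool" where
  "pyramid C \<longleftrightarrow> {p \<in> C. snd p = 0} = {(0, 0)}"

end

theory Submission
  imports Defs
begin

text \<open>Heaps are characterised intrinsically: finitely many placed pieces such that concurrent
  pieces lie on distinct levels and every piece above the axis rests on a concurrent piece one
  level lower. Pushing a new piece r under a heap and letting everything settle is inverse to
  removing the base piece r and letting the rest settle. Hence the heaps with n + 1 pieces whose
  base lies in the window [l, r], r = l + w, and contains r correspond to the heaps with n pieces
  whose base lies in [min l (r - a + 1), r + a). The resulting recursion for the number of heaps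
  with base in a window of width w is solved by binomial (a n + w - a) n for w \<ge> a. A pyramid
  is a heap with base in the window {0}, whose first step widens the window to width 2a - 1,
  which gives binomial (a m - 1) (m - 1).\<close>

section \<open>Heaps as configurations\<close>

lemma concurrent_iff: "concurrent a s t \<longleftrightarrow> \<bar>s - t\<bar> < int a"
proof
  assume "concurrent a s t"
  then obtain x where "x \<in> {real_of_int s <..< real_of_int s + real a}"
    "x \<in> {real_of_int t <..< real_of_int t + real a}"
    unfolding concurrent_def by blast
  then have "real_of_int s < real_of_int t + real a" "real_of_int t < real_of_int s + real a"
    by auto
  then show "\<bar>s - t\<bar> < int a" by linarith
next
  assume "\<bar>s - t\<bar> < int a"
  then have "real_of_int (max s t) + 1/2 \<in> {real_of_int s <..< real_of_int s + real a}
      \<inter> {real_of_int t <..< real_of_int t + real a}"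
    by (auto simp: max_def)
  then show "concurrent a s t" unfolding concurrent_def by blast
qed

lemma concurrent_sym: "concurrent a s t \<Longrightarrow> concurrent a t s"
  unfolding concurrent_iff by linarith

lemma concurrent_refl: "0 < a \<Longrightarrow> concurrent a s s"
  unfolding concurrent_iff by simp

definition separated :: "nat \<Rightarrow> (int \<times> nat) set \<Rightarrow> bool" where
  "separated a C \<longleftrightarrow>
     (\<forall>x\<in>C. \<forall>y\<in>C. concurrent a (fst x) (fst y) \<and> snd x = snd y \<longrightarrow> x = y)"

definition supported :: "nat \<Rightarrow> (int \<times> nat) set \<Rightarrow> bool" where
  "supported a C \<longleftrightarrow>
     (\<forall>x\<in>C. 0 < snd x \<longrightarrow> (\<exists>y\<in>C. snd y = snd x - 1 \<and> concurrent a (fst x) (fst y)))"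

definition is_heap :: "nat \<Rightarrow> (int \<times> nat) set \<Rightarrow> bool" where
  "is_heap a C \<longleftrightarrow> finite C \<and> separated a C \<and> supported a C"

lemma separatedD:
  "separated a C \<Longrightarrow> x \<in> C \<Longrightarrow> y \<in> C \<Longrightarrow> concurrent a (fst x) (fst y) \<Longrightarrow>
     snd x = snd y \<Longrightarrow> x = y"
  unfolding separated_def by blast

lemma separated_subset: "separated a C \<Longrightarrow> D \<subseteq> C \<Longrightarrow> separated a D"
  unfolding separated_def by blast

lemma supportedD:
  "supported a C \<Longrightarrow> x \<in> C \<Longrightarrow> 0 < snd x \<Longrightarrow>
     \<exists>y\<in>C. snd y = snd x - 1 \<and> concurrent a (fst x) (fst y)"
  unfolding supported_def by blast

lemma finite_levels: "finite C \<Longrightarrow> finite {snd p | p. p \<in> C \<and> P p}"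
  by (rule finite_subset[of _ "snd ` C"]) force+

lemma drop_level_eq:
  assumes "finite C" "\<exists>p\<in>C. concurrent a s (fst p)"
  shows "drop_level a s C = Suc (Max {snd p | p. p \<in> C \<and> concurrent a s (fst p)})"
  using assms unfolding drop_level_def by simp

lemma drop_level_gt:
  assumes "finite C" "p \<in> C" "concurrent a s (fst p)"
  shows "snd p < drop_level a s C"
proof -
  have "snd p \<in> {snd p | p. p \<in> C \<and> concurrent a s (fst p)}"
    using assms by blast
  then have "snd p \<le> Max {snd p | p. p \<in> C \<and> concurrent a s (fst p)}"
    using assms by (intro Max_ge finite_levels)
  then show ?thesis using drop_level_eq assms by fastforce
qed

lemma drop_level_supported:
  assumes "finite C" "0 < drop_level a s C"
  shows "\<exists>p\<in>C. snd p = drop_level a s C - 1 \<and> concurrent a s (fst p)"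
proof -
  let ?M = "{snd p | p. p \<in> C \<and> concurrent a s (fst p)}"
  have ex: "\<exists>p\<in>C. concurrent a s (fst p)"
    using assms(2) unfolding drop_level_def by (auto split: if_splits)
  then have "?M \<noteq> {}" by blast
  then have "Max ?M \<in> ?M" using assms(1) by (intro Max_in finite_levels)
  then show ?thesis using drop_level_eq[OF assms(1) ex] by force
qed

lemma is_heap_drop_piece:
  assumes "is_heap a C"
  shows "is_heap a (drop_piece a s C)"
proof -
  have fin: "finite C" and sep: "separated a C" and sup: "supported a C"
    using assms unfolding is_heap_def by auto
  define L where "L = drop_level a s C"
  have "snd p \<noteq> L" if "p \<in> C" "concurrent a s (fst p)" for p
    using drop_level_gt[OF fin that] unfolding L_def by simp
  then have "separated a (insert (s, L) C)"
    using sep concurrent_sym unfolding separated_def by fastforce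
  moreover have "supported a (insert (s, L) C)"
    unfolding supported_def
  proof (intro ballI impI)
    fix x assume x: "x \<in> insert (s, L) C" "0 < snd x"
    show "\<exists>y\<in>insert (s, L) C. snd y = snd x - 1 \<and> concurrent a (fst x) (fst y)"
    proof (cases "x = (s, L)")
      case True
      then show ?thesis using drop_level_supported[OF fin, of a s] x(2) unfolding L_def by auto
    next
      case False
      then show ?thesis using supportedD[OF sup, of x] x by auto
    qed
  qed
  ultimately show ?thesis
    using fin by (simp add: is_heap_def drop_piece_def flip: L_def)
qed

lemma drop_level_highest:
  assumes "is_heap a C" "x \<in> C" and top: "\<And>y. y \<in> C \<Longrightarrow> snd y \<le> snd x"
  shows "drop_level a (fst x) (C - {x}) = snd x"
proof -
  have fin: "finite C" and sep: "separated a C" and sup: "supported a C"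
    using assms(1) unfolding is_heap_def by auto
  let ?M = "{snd p | p. p \<in> C - {x} \<and> concurrent a (fst x) (fst p)}"
  have below: "snd p < snd x" if p: "p \<in> C - {x}" "concurrent a (fst x) (fst p)" for p
  proof -
    have "snd p \<noteq> snd x" using separatedD[OF sep assms(2), of p] p by auto
    then show ?thesis using top[of p] p by simp
  qed
  show ?thesis
  proof (cases "snd x = 0")
    case True
    then have "\<not> (\<exists>p\<in>C - {x}. concurrent a (fst x) (fst p))" using below by fastforce
    then show ?thesis using True by (simp add: drop_level_def)
  next
    case False
    then obtain z where z: "z \<in> C" "snd z = snd x - 1" "concurrent a (fst x) (fst z)"
      using supportedD[OF sup assms(2)] by auto
    then have zx: "z \<in> C - {x}" using False by auto
    have "Max ?M = snd x - 1"
    proof (rule Max_eqI)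
      show "finite ?M" using fin by (intro finite_levels) simp
      have "snd z \<in> ?M" using zx z(3) by blast
      then show "snd x - 1 \<in> ?M" using z(2) by simp
    next
      fix m assume "m \<in> ?M"
      then obtain p where "p \<in> C - {x}" "concurrent a (fst x) (fst p)" "m = snd p" by blast
      then show "m \<le> snd x - 1" using below by fastforce
    qed
    moreover have "drop_level a (fst x) (C - {x}) = Suc (Max ?M)"
      using zx z(3) fin by (intro drop_level_eq) auto
    ultimately show ?thesis using False by simp
  qed
qed

lemma is_heap_Diff_highest:
  assumes "is_heap a C" "x \<in> C" and top: "\<And>y. y \<in> C \<Longrightarrow> snd y \<le> snd x"
  shows "is_heap a (C - {x})"
proof -
  have fin: "finite C" and sep: "separated a C" and sup: "supported a C"
    using assms(1) unfolding is_heap_def by auto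
  have "supported a (C - {x})"
    unfolding supported_def
  proof (intro ballI impI)
    fix y assume y: "y \<in> C - {x}" "0 < snd y"
    then obtain z where z: "z \<in> C" "snd z = snd y - 1" "concurrent a (fst y) (fst z)"
      using supportedD[OF sup] by blast
    moreover have "z \<noteq> x" using z(2) y top[of y] by auto
    ultimately show "\<exists>z\<in>C - {x}. snd z = snd y - 1 \<and> concurrent a (fst y) (fst z)" by auto
  qed
  then show ?thesis using fin separated_subset[OF sep] unfolding is_heap_def by auto
qed

text \<open>A heap is rebuilt by dropping its pieces in order of increasing level.\<close>
lemma is_heap_in_heaps:
  assumes "is_heap a C"
  shows "C \<in> heaps a"
  using assms
proof (induction "card C" arbitrary: C)
  case 0
  then show ?case by (simp add: is_heap_def heaps.empty)
next
  case (Suc n)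
  have fin: "finite C" using Suc.prems unfolding is_heap_def by auto
  have "C \<noteq> {}" using Suc.hyps(2) by auto
  then have "Max (snd ` C) \<in> snd ` C" using fin by simp
  then obtain x where x: "x \<in> C" "snd x = Max (snd ` C)" by auto
  have top: "snd y \<le> snd x" if "y \<in> C" for y using x that fin by simp
  have "C - {x} \<in> heaps a"
    using Suc.hyps Suc.prems is_heap_Diff_highest[OF Suc.prems x(1) top] x(1) fin by simp
  moreover have "drop_piece a (fst x) (C - {x}) = C"
    using drop_level_highest[OF Suc.prems x(1) top] x(1)
    unfolding drop_piece_def by (simp add: insert_absorb)
  ultimately show ?case using heaps.drop[of "C - {x}" a "fst x"] by simp
qed

lemma heaps_iff_is_heap: "C \<in> heaps a \<longleftrightarrow> is_heap a C"
proof
  show "C \<in> heaps a \<Longrightarrow> is_heap a C"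
  proof (induction rule: heaps.induct)
    case empty
    show ?case by (simp add: is_heap_def separated_def supported_def)
  next
    case drop
    then show ?case by (simp add: is_heap_drop_piece)
  qed
qed (rule is_heap_in_heaps)

section \<open>Settling a configuration\<close>

definition beneath :: "nat \<Rightarrow> (int \<times> nat) set \<Rightarrow> int \<times> nat \<Rightarrow> (int \<times> nat) set" where
  "beneath a C x = {y \<in> C. snd y < snd x \<and> concurrent a (fst x) (fst y)}"

text \<open>The level at which piece x comes to rest when the pieces of C are dropped in the
  order of their current levels.\<close>
function fall_level :: "nat \<Rightarrow> (int \<times> nat) set \<Rightarrow> int \<times> nat \<Rightarrow> nat" where
  "fall_level a C x =
     (if beneath a C x = {} then 0 else Suc (Max (fall_level a C ` beneath a C x)))"
  by auto
termination by (relation "measure (\<lambda>(a, C, x). snd x)") (auto simp: beneath_def)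

declare fall_level.simps [simp del]

definition settle :: "nat \<Rightarrow> (int \<times> nat) set \<Rightarrow> (int \<times> nat) set" where
  "settle a C = (\<lambda>x. (fst x, fall_level a C x)) ` C"

lemma finite_beneath: "finite C \<Longrightarrow> finite (beneath a C x)"
  unfolding beneath_def by simp

lemma fall_level_eq_0_iff: "fall_level a C x = 0 \<longleftrightarrow> beneath a C x = {}"
  by (subst fall_level.simps) simp

lemma fall_level_eq_Suc:
  "beneath a C x \<noteq> {} \<Longrightarrow> fall_level a C x = Suc (Max (fall_level a C ` beneath a C x))"
  by (subst fall_level.simps) simp

lemma fall_level_less:
  assumes "finite C" "y \<in> beneath a C x"
  shows "fall_level a C y < fall_level a C x"
proof -
  have "fall_level a C y \<le> Max (fall_level a C ` beneath a C x)"
    using assms by (simp add: finite_beneath)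
  moreover have "beneath a C x \<noteq> {}" using assms(2) by blast
  ultimately show ?thesis using fall_level_eq_Suc[of a C x] by simp
qed

lemma fall_level_supported:
  assumes "finite C" "0 < fall_level a C x"
  shows "\<exists>y\<in>beneath a C x. fall_level a C y = fall_level a C x - 1"
proof -
  have "fall_level a C x \<noteq> 0" using assms(2) by simp
  then have ne: "beneath a C x \<noteq> {}" using fall_level_eq_0_iff[of a C x] by simp
  then have "Max (fall_level a C ` beneath a C x) \<in> fall_level a C ` beneath a C x"
    using assms(1) by (simp add: finite_beneath)
  then show ?thesis using fall_level_eq_Suc[OF ne] by auto
qed

lemma fall_level_inj:
  assumes "finite C" "separated a C" "x \<in> C" "y \<in> C" "concurrent a (fst x) (fst y)"
    and "fall_level a C x = fall_level a C y"
  shows "x = y"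
proof -
  have "\<not> snd x < snd y" "\<not> snd y < snd x"
    using fall_level_less[OF assms(1), of x a y] fall_level_less[OF assms(1), of y a x]
      assms(3-6) concurrent_sym unfolding beneath_def by auto
  then show ?thesis using separatedD[OF assms(2-5)] by simp
qed

lemma is_heap_settle:
  assumes "finite C" "separated a C"
  shows "is_heap a (settle a C)"
  unfolding is_heap_def
proof (intro conjI)
  show "finite (settle a C)" using assms(1) unfolding settle_def by simp
  show "separated a (settle a C)"
    using fall_level_inj[OF assms] unfolding separated_def settle_def by auto
  show "supported a (settle a C)"
    unfolding supported_def settle_def
  proof (intro ballI impI)
    fix u assume u: "u \<in> (\<lambda>x. (fst x, fall_level a C x)) ` C" "0 < snd u"
    then obtain x where x: "x \<in> C" "u = (fst x, fall_level a C x)" by auto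
    have "0 < fall_level a C x" using x u(2) by simp
    then obtain y where "y \<in> beneath a C x" "fall_level a C y = fall_level a C x - 1"
      using fall_level_supported[OF assms(1)] by blast
    then show "\<exists>v\<in>(\<lambda>x. (fst x, fall_level a C x)) ` C.
        snd v = snd u - 1 \<and> concurrent a (fst u) (fst v)"
      using x unfolding beneath_def by (intro bexI[of _ "(fst y, fall_level a C y)"]) auto
  qed
qed

lemma card_settle:
  assumes "0 < a" "finite C" "separated a C"
  shows "card (settle a C) = card C"
  unfolding settle_def
  by (rule card_image, rule inj_onI)
    (use fall_level_inj[OF assms(2,3)] concurrent_refl[OF assms(1)] in auto)

lemma fall_level_of_heap:
  assumes "is_heap a C"
  shows "x \<in> C \<Longrightarrow> fall_level a C x = snd x"
proof (induction "snd x" arbitrary: x rule: less_induct)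
  case less
  have fin: "finite C" and sup: "supported a C" using assms unfolding is_heap_def by auto
  show ?case
  proof (cases "snd x = 0")
    case True
    then show ?thesis by (simp add: fall_level_eq_0_iff beneath_def)
  next
    case False
    then obtain y where y: "y \<in> C" "snd y = snd x - 1" "concurrent a (fst x) (fst y)"
      using supportedD[OF sup less.prems] by auto
    then have yb: "y \<in> beneath a C x" using False unfolding beneath_def by auto
    then have ne: "beneath a C x \<noteq> {}" by blast
    have "fall_level a C ` beneath a C x = snd ` beneath a C x"
      using less.hyps unfolding beneath_def by (auto intro!: image_cong)
    moreover have "Max (snd ` beneath a C x) = snd x - 1"
    proof (rule Max_eqI)
      show "finite (snd ` beneath a C x)" using fin by (simp add: finite_beneath)
      show "snd x - 1 \<in> snd ` beneath a C x" using yb y(2) by (metis image_eqI)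
    qed (auto simp: beneath_def)
    ultimately show ?thesis using fall_level_eq_Suc[OF ne] False by simp
  qed
qed

lemma settle_heap: "is_heap a C \<Longrightarrow> settle a C = C"
  unfolding settle_def using fall_level_of_heap[of a C] by force

lemma fall_level_relevel:
  assumes fin: "finite C" and sep: "separated a C"
    and mono: "\<And>x y. x \<in> C \<Longrightarrow> y \<in> C \<Longrightarrow> concurrent a (fst x) (fst y) \<Longrightarrow>
                  snd x < snd y \<Longrightarrow> \<phi> x < \<phi> y"
  shows "x \<in> C \<Longrightarrow> fall_level a ((\<lambda>y. (fst y, \<phi> y)) ` C) (fst x, \<phi> x) = fall_level a C x"
proof (induction "snd x" arbitrary: x rule: less_induct)
  case less
  let ?f = "\<lambda>x. (fst x, \<phi> x)"
  have "beneath a (?f ` C) (?f x) = ?f ` beneath a C x"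
  proof (intro equalityI subsetI)
    fix z assume "z \<in> beneath a (?f ` C) (?f x)"
    then obtain y where y: "y \<in> C" "z = ?f y" "\<phi> y < \<phi> x" "concurrent a (fst x) (fst y)"
      unfolding beneath_def by auto
    have "snd y \<noteq> snd x" using separatedD[OF sep less.prems y(1) y(4)] y(3) by auto
    then have "snd y < snd x" using mono[OF less.prems y(1,4)] y(3) by fastforce
    then show "z \<in> ?f ` beneath a C x" using y unfolding beneath_def by auto
  next
    fix z assume "z \<in> ?f ` beneath a C x"
    then show "z \<in> beneath a (?f ` C) (?f x)"
      using mono less.prems concurrent_sym unfolding beneath_def by fastforce
  qed
  moreover have "fall_level a (?f ` C) ` ?f ` beneath a C x = fall_level a C ` beneath a C x"
    using less.hyps unfolding image_image beneath_def by (auto intro!: image_cong)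
  ultimately show ?case using fall_level.simps[of a "?f ` C" "?f x"] fall_level.simps[of a C x]
    by simp
qed

lemma settle_relevel:
  assumes "finite C" "separated a C"
    and "\<And>x y. x \<in> C \<Longrightarrow> y \<in> C \<Longrightarrow> concurrent a (fst x) (fst y) \<Longrightarrow>
                  snd x < snd y \<Longrightarrow> \<phi> x < \<phi> y"
  shows "settle a ((\<lambda>x. (fst x, \<phi> x)) ` C) = settle a C"
proof -
  have "fall_level a ((\<lambda>y. (fst y, \<phi> y)) ` C) (fst x, \<phi> x) = fall_level a C x"
    if "x \<in> C" for x using fall_level_relevel[OF assms that] .
  then show ?thesis unfolding settle_def image_image by (auto intro!: image_cong)
qed

section \<open>Adding and removing a base piece\<close>

definition base :: "(int \<times> nat) set \<Rightarrow> int set" where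
  "base C = {s. (s, 0) \<in> C}"

definition lift :: "(int \<times> nat) set \<Rightarrow> (int \<times> nat) set" where
  "lift C = (\<lambda>x. (fst x, Suc (snd x))) ` C"

definition add_base_piece :: "nat \<Rightarrow> int \<Rightarrow> (int \<times> nat) set \<Rightarrow> (int \<times> nat) set" where
  "add_base_piece a r H = settle a (insert (r, 0) (lift H))"

definition remove_base_piece :: "nat \<Rightarrow> int \<Rightarrow> (int \<times> nat) set \<Rightarrow> (int \<times> nat) set" where
  "remove_base_piece a r H = settle a (H - {(r, 0)})"

lemma base_settle: "base (settle a C) = fst ` {x \<in> C. beneath a C x = {}}"
proof -
  have "base (settle a C) = fst ` {x \<in> C. fall_level a C x = 0}"
    unfolding base_def settle_def by force
  then show ?thesis by (simp add: fall_level_eq_0_iff)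
qed

lemma lift_level_pos: "x \<in> lift C \<Longrightarrow> 0 < snd x"
  unfolding lift_def by auto

lemma finite_lift: "finite C \<Longrightarrow> finite (lift C)"
  unfolding lift_def by simp

lemma card_lift: "card (lift C) = card C"
  unfolding lift_def by (rule card_image) (auto intro: inj_onI simp: prod_eq_iff)

lemma separated_insert_lift:
  assumes "separated a C"
  shows "separated a (insert (r, 0) (lift C))"
  unfolding separated_def
proof (intro ballI impI)
  fix x y assume "x \<in> insert (r, 0) (lift C)" "y \<in> insert (r, 0) (lift C)"
    "concurrent a (fst x) (fst y) \<and> snd x = snd y"
  then show "x = y"
    using separatedD[OF assms] lift_level_pos[of x C] lift_level_pos[of y C]
    unfolding lift_def by auto
qed

lemma is_heap_add_base_piece: "is_heap a H \<Longrightarrow> is_heap a (add_base_piece a r H)"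
  unfolding add_base_piece_def is_heap_def
  by (intro is_heap_settle[unfolded is_heap_def]) (auto simp: finite_lift separated_insert_lift)

lemma card_add_base_piece:
  assumes "0 < a" "is_heap a H"
  shows "card (add_base_piece a r H) = Suc (card H)"
proof -
  have "finite H" "separated a H" using assms(2) unfolding is_heap_def by auto
  moreover have "(r, 0) \<notin> lift H" using lift_level_pos by fastforce
  ultimately show ?thesis unfolding add_base_piece_def
    by (simp add: card_settle[OF assms(1)] finite_lift separated_insert_lift card_lift)
qed

lemma beneath_insert_lift_eq_empty_iff:
  assumes "is_heap a H" "(t, h) \<in> H"
  shows "beneath a (insert (r, 0) (lift H)) (t, Suc h) = {} \<longleftrightarrow> h = 0 \<and> \<not> concurrent a r t"
proof
  assume empty: "beneath a (insert (r, 0) (lift H)) (t, Suc h) = {}"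
  have "h = 0"
  proof (rule ccontr)
    assume "h \<noteq> 0"
    then obtain y where "y \<in> H" "snd y = h - 1" "concurrent a t (fst y)"
      using assms supportedD[of a H "(t, h)"] unfolding is_heap_def by auto
    then have "(fst y, Suc (snd y)) \<in> beneath a (insert (r, 0) (lift H)) (t, Suc h)"
      using \<open>h \<noteq> 0\<close> unfolding beneath_def lift_def by auto
    then show False using empty by blast
  qed
  moreover have "(r, 0) \<notin> beneath a (insert (r, 0) (lift H)) (t, Suc h)" using empty by blast
  then have "\<not> concurrent a t r" unfolding beneath_def by simp
  ultimately show "h = 0 \<and> \<not> concurrent a r t" using concurrent_sym by blast
next
  assume h: "h = 0 \<and> \<not> concurrent a r t"
  show "beneath a (insert (r, 0) (lift H)) (t, Suc h) = {}"
  proof (rule equals0I)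
    fix y assume "y \<in> beneath a (insert (r, 0) (lift H)) (t, Suc h)"
    then have y: "y \<in> insert (r, 0) (lift H)" "snd y = 0" "concurrent a t (fst y)"
      using h unfolding beneath_def by auto
    then have "y = (r, 0)" using lift_level_pos[of y H] by auto
    then show False using y(3) h concurrent_sym by auto
  qed
qed

lemma base_add_base_piece:
  assumes "is_heap a H"
  shows "base (add_base_piece a r H) = insert r {s \<in> base H. \<not> concurrent a r s}"
proof -
  let ?D = "insert (r, 0) (lift H)"
  have "{x \<in> ?D. beneath a ?D x = {}} =
      insert (r, 0) ((\<lambda>s. (s, 1::nat)) ` {s \<in> base H. \<not> concurrent a r s})"
  proof (intro equalityI subsetI)
    fix x assume x: "x \<in> {x \<in> ?D. beneath a ?D x = {}}"
    show "x \<in> insert (r, 0) ((\<lambda>s. (s, 1::nat)) ` {s \<in> base H. \<not> concurrent a r s})"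
    proof (cases "x = (r, 0)")
      case False
      then have "x \<in> lift H" using x by auto
      then obtain t h where "(t, h) \<in> H" "x = (t, Suc h)" unfolding lift_def by auto
      then show ?thesis
        using x beneath_insert_lift_eq_empty_iff[OF assms] unfolding base_def by auto
    qed simp
  next
    fix x assume x: "x \<in> insert (r, 0) ((\<lambda>s. (s, 1::nat)) ` {s \<in> base H. \<not> concurrent a r s})"
    show "x \<in> {x \<in> ?D. beneath a ?D x = {}}"
    proof (cases "x = (r, 0)")
      case True
      then show ?thesis unfolding beneath_def by simp
    next
      case False
      then obtain s where s: "(s, 0) \<in> H" "\<not> concurrent a r s" "x = (s, Suc 0)"
        using x unfolding base_def by auto
      then have "x \<in> lift H" unfolding lift_def by force
      then show ?thesis using s beneath_insert_lift_eq_empty_iff[OF assms s(1)] by simp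
    qed
  qed
  then show ?thesis unfolding add_base_piece_def base_settle by (simp add: image_image)
qed

lemma is_heap_remove_base_piece: "is_heap a H \<Longrightarrow> is_heap a (remove_base_piece a r H)"
  unfolding remove_base_piece_def is_heap_def
  by (intro is_heap_settle[unfolded is_heap_def]) (auto intro: separated_subset)

lemma card_remove_base_piece:
  assumes "0 < a" "is_heap a H" "(r, 0) \<in> H"
  shows "card (remove_base_piece a r H) = card H - 1"
  using assms card_settle[OF assms(1), of "H - {(r, 0)}"] separated_subset[of a H]
  unfolding remove_base_piece_def is_heap_def by auto

lemma base_remove_base_piece:
  assumes "is_heap a H"
  shows "base (remove_base_piece a r H) \<subseteq> (base H - {r}) \<union> {s. concurrent a r s}"
proof
  fix s assume "s \<in> base (remove_base_piece a r H)"
  then obtain x where x: "x \<in> H - {(r, 0)}" "beneath a (H - {(r, 0)}) x = {}" "s = fst x"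
    unfolding remove_base_piece_def base_settle by auto
  show "s \<in> (base H - {r}) \<union> {s. concurrent a r s}"
  proof (cases "snd x = 0")
    case True
    then have "x = (s, 0)" using x(3) by (simp add: prod_eq_iff)
    then show ?thesis using x(1) unfolding base_def by auto
  next
    case False
    then obtain y where y: "y \<in> H" "snd y = snd x - 1" "concurrent a (fst x) (fst y)"
      using assms x(1) supportedD[of a H x] unfolding is_heap_def by auto
    have "y \<notin> beneath a (H - {(r, 0)}) x" using x(2) by blast
    then have "y = (r, 0)" using y False unfolding beneath_def by auto
    then show ?thesis using y x(3) concurrent_sym by auto
  qed
qed

text \<open>Both inverse laws reduce, via settle_relevel, to settling a heap: lifting and
  re-settling change levels but not the order of concurrent pieces.\<close>
lemma remove_add_base_piece:
  assumes "0 < a" "is_heap a H"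
  shows "remove_base_piece a r (add_base_piece a r H) = H"
proof -
  let ?D = "insert (r, 0) (lift H)"
  let ?f = "\<lambda>x. (fst x, fall_level a ?D x)"
  have fin: "finite H" and sep: "separated a H" using assms(2) unfolding is_heap_def by auto
  have finD: "finite ?D" using fin by (simp add: finite_lift)
  have sepL: "separated a (lift H)" using separated_subset[OF separated_insert_lift[OF sep]] by blast
  have "(r, 0) \<notin> ?f ` lift H"
  proof
    assume "(r, 0) \<in> ?f ` lift H"
    then obtain x where x: "x \<in> lift H" "fst x = r" "fall_level a ?D x = 0" by auto
    have "(r, 0) \<in> beneath a ?D x"
      using x lift_level_pos[OF x(1)] concurrent_refl[OF assms(1)] unfolding beneath_def by auto
    then show False using x(3) fall_level_eq_0_iff[of a ?D x] by blast
  qed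
  moreover have "fall_level a ?D (r, 0) = 0" by (simp add: fall_level_eq_0_iff beneath_def)
  ultimately have E: "add_base_piece a r H - {(r, 0)} = ?f ` lift H"
    unfolding add_base_piece_def settle_def by auto
  have mono: "fall_level a ?D x < fall_level a ?D y"
    if "x \<in> lift H" "y \<in> lift H" "concurrent a (fst x) (fst y)" "snd x < snd y" for x y
    using fall_level_less[OF finD, of x a y] that concurrent_sym unfolding beneath_def by auto
  have "remove_base_piece a r (add_base_piece a r H) = settle a (lift H)"
    unfolding remove_base_piece_def E by (rule settle_relevel[OF finite_lift[OF fin] sepL mono])
  also have "\<dots> = settle a H"
    unfolding lift_def by (rule settle_relevel[OF fin sep]) simp
  finally show ?thesis using settle_heap[OF assms(2)] by simp
qed

lemma add_remove_base_piece:
  assumes "is_heap a H" "(r, 0) \<in> H"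
  shows "add_base_piece a r (remove_base_piece a r H) = H"
proof -
  let ?H0 = "H - {(r, 0)}"
  have fin: "finite H" and sep: "separated a H" using assms(1) unfolding is_heap_def by auto
  define \<phi> where "\<phi> x = (if x = (r, 0) then 0 else Suc (fall_level a ?H0 x))" for x
  have "lift (remove_base_piece a r H) = (\<lambda>x. (fst x, \<phi> x)) ` ?H0"
    unfolding lift_def remove_base_piece_def settle_def image_image \<phi>_def
    by (auto intro!: image_cong)
  moreover have "(\<lambda>x. (fst x, \<phi> x)) ` insert (r, 0) ?H0 = insert (r, 0) ((\<lambda>x. (fst x, \<phi> x)) ` ?H0)"
    by (simp only: image_insert) (simp add: \<phi>_def)
  then have "(\<lambda>x. (fst x, \<phi> x)) ` H = insert (r, 0) ((\<lambda>x. (fst x, \<phi> x)) ` ?H0)"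
    unfolding insert_Diff[OF assms(2)] .
  ultimately have "insert (r, 0) (lift (remove_base_piece a r H)) = (\<lambda>x. (fst x, \<phi> x)) ` H"
    by simp
  moreover have "\<phi> x < \<phi> y"
    if "x \<in> H" "y \<in> H" "concurrent a (fst x) (fst y)" "snd x < snd y" for x y
  proof (cases "x = (r, 0)")
    case True
    then show ?thesis using that by (auto simp: \<phi>_def)
  next
    case False
    then have "x \<in> beneath a ?H0 y" "y \<noteq> (r, 0)"
      using that concurrent_sym unfolding beneath_def by auto
    then show ?thesis using fall_level_less[of ?H0 x a y] fin False by (simp add: \<phi>_def)
  qed
  ultimately show ?thesis
    unfolding add_base_piece_def using settle_relevel[OF fin sep] settle_heap[OF assms(1)] by simp
qed

section \<open>Counting heaps with base in a window\<close>

lemma is_heap_base_nonempty: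
  assumes "is_heap a C" "C \<noteq> {}"
  shows "base C \<noteq> {}"
proof -
  have fin: "finite C" and sup: "supported a C" using assms(1) unfolding is_heap_def by auto
  have "Min (snd ` C) \<in> snd ` C" using fin assms(2) by simp
  then obtain x where x: "x \<in> C" "snd x = Min (snd ` C)" by auto
  have "snd x = 0"
  proof (rule ccontr)
    assume "snd x \<noteq> 0"
    then obtain y where "y \<in> C" "snd y = snd x - 1" using supportedD[OF sup x(1)] by auto
    moreover have "Min (snd ` C) \<le> snd y" using fin calculation(1) by simp
    ultimately show False using \<open>snd x \<noteq> 0\<close> x(2) by simp
  qed
  then have "(fst x, 0) \<in> C" using x(1) by (cases x) simp
  then have "fst x \<in> base C" unfolding base_def by simp
  then show ?thesis by blast
qed

definition window_heaps :: "nat \<Rightarrow> nat \<Rightarrow> int \<Rightarrow> nat \<Rightarrow> (int \<times> nat) set set" where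
  "window_heaps a n l w = {C. is_heap a C \<and> card C = n \<and> base C \<subseteq> {l..<l + int w}}"

lemma window_heaps_0: "window_heaps a 0 l w = {{}}"
  unfolding window_heaps_def is_heap_def separated_def supported_def base_def by auto

lemma window_heaps_Suc_0: "window_heaps a (Suc n) l 0 = {}"
  using is_heap_base_nonempty unfolding window_heaps_def by fastforce

text \<open>Removing the base piece r = l + w from a heap with base in [l, r] leaves a heap whose
  base lies in [l, r) or is concurrent with r, hence in the window from window_left a l w to
  r + a, of width window_width a w.\<close>
definition window_left :: "nat \<Rightarrow> int \<Rightarrow> nat \<Rightarrow> int" where
  "window_left a l w = min l (l + int w - int a + 1)"

definition window_width :: "nat \<Rightarrow> nat \<Rightarrow> nat" where
  "window_width a w = max (w + a) (2 * a - 1)"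

lemma window_right_end:
  "0 < a \<Longrightarrow> window_left a l w + int (window_width a w) = l + int w + int a"
  unfolding window_left_def window_width_def by (auto simp: min_def max_def)

lemma add_base_piece_window:
  assumes "0 < a" "H \<in> window_heaps a n (window_left a l w) (window_width a w)"
  shows "add_base_piece a (l + int w) H \<in> window_heaps a (Suc n) l (Suc w)"
proof -
  have H: "is_heap a H" "card H = n" "base H \<subseteq> {window_left a l w..<l + int w + int a}"
    using assms window_right_end[OF assms(1)] unfolding window_heaps_def by auto
  have "s \<in> {l..<l + int (Suc w)}" if "s \<in> base H" "\<not> concurrent a (l + int w) s" for s
  proof -
    have "s < l + int w + int a" using that(1) H(3) by auto
    then have "s \<le> l + int w - int a" using that(2) unfolding concurrent_iff by arith
    then show ?thesis using that H(3) assms(1) by (auto simp: window_left_def)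
  qed
  then show ?thesis
    using H assms(1) is_heap_add_base_piece card_add_base_piece base_add_base_piece[OF H(1)]
    unfolding window_heaps_def by auto
qed

lemma remove_base_piece_window:
  assumes "0 < a" "C \<in> window_heaps a (Suc n) l (Suc w)" "l + int w \<in> base C"
  shows "remove_base_piece a (l + int w) C \<in> window_heaps a n (window_left a l w) (window_width a w)"
proof -
  let ?r = "l + int w"
  have C: "is_heap a C" "card C = Suc n" "base C \<subseteq> {l..<?r + 1}"
    using assms(2) unfolding window_heaps_def by auto
  have "s \<in> {window_left a l w..<?r + int a}"
    if "s \<in> (base C - {?r}) \<union> {s. concurrent a ?r s}" for s
    using that C(3) by (auto simp: window_left_def concurrent_iff min_le_iff_disj)
  then have "base (remove_base_piece a ?r C) \<subseteq> {window_left a l w..<?r + int a}"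
    using base_remove_base_piece[OF C(1)] by blast
  then show ?thesis
    using C assms(3) is_heap_remove_base_piece card_remove_base_piece[OF assms(1) C(1)]
      window_right_end[OF assms(1)]
    unfolding window_heaps_def base_def by auto
qed

lemma window_heaps_Suc_Suc:
  assumes "0 < a"
  shows "window_heaps a (Suc n) l (Suc w) = window_heaps a (Suc n) l w \<union>
    add_base_piece a (l + int w) ` window_heaps a n (window_left a l w) (window_width a w)"
proof (intro equalityI subsetI)
  fix C assume C: "C \<in> window_heaps a (Suc n) l (Suc w)"
  show "C \<in> window_heaps a (Suc n) l w \<union>
    add_base_piece a (l + int w) ` window_heaps a n (window_left a l w) (window_width a w)"
  proof (cases "l + int w \<in> base C")
    case True
    then have "C = add_base_piece a (l + int w) (remove_base_piece a (l + int w) C)"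
      using C add_remove_base_piece unfolding window_heaps_def base_def by auto
    then show ?thesis using remove_base_piece_window[OF assms C True] by blast
  next
    case False
    have "base C \<subseteq> {l..<l + int w}"
    proof
      fix s assume "s \<in> base C"
      then have "s \<in> {l..<l + int (Suc w)}" "s \<noteq> l + int w"
        using C False unfolding window_heaps_def by auto
      then show "s \<in> {l..<l + int w}" by auto
    qed
    then show ?thesis using C unfolding window_heaps_def by auto
  qed
qed (use add_base_piece_window[OF assms] in \<open>auto simp: window_heaps_def\<close>)

lemma inj_on_add_base_piece: "0 < a \<Longrightarrow> inj_on (add_base_piece a r) {H. is_heap a H}"
  by (rule inj_on_inverseI[where g = "remove_base_piece a r"]) (simp add: remove_add_base_piece)

fun window_count :: "nat \<Rightarrow> nat \<Rightarrow> nat \<Rightarrow> nat" where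
  "window_count a 0 w = 1"
| "window_count a (Suc n) 0 = 0"
| "window_count a (Suc n) (Suc w) = window_count a (Suc n) w + window_count a n (window_width a w)"

lemma card_window_heaps:
  assumes "0 < a"
  shows "finite (window_heaps a n l w) \<and> card (window_heaps a n l w) = window_count a n w"
proof (induction n arbitrary: l w)
  case 0
  then show ?case by (simp add: window_heaps_0)
next
  case (Suc n)
  note IH = Suc.IH
  show ?case
  proof (induction w arbitrary: l)
    case 0
    then show ?case by (simp add: window_heaps_Suc_0)
  next
    case (Suc w)
    let ?r = "l + int w"
    let ?W = "window_heaps a n (window_left a l w) (window_width a w)"
    have "inj_on (add_base_piece a ?r) ?W"
      using inj_on_add_base_piece[OF assms] by (rule inj_on_subset) (auto simp: window_heaps_def)
    then have img: "finite (add_base_piece a ?r ` ?W)"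
      "card (add_base_piece a ?r ` ?W) = window_count a n (window_width a w)"
      using IH[of "window_left a l w" "window_width a w"] by (auto simp: card_image)
    have "?r \<in> base C" if "C \<in> add_base_piece a ?r ` ?W" for C
      using that base_add_base_piece unfolding window_heaps_def by auto
    then have "window_heaps a (Suc n) l w \<inter> add_base_piece a ?r ` ?W = {}"
      unfolding window_heaps_def by fastforce
    moreover have "finite (window_heaps a (Suc n) l w)"
      "card (window_heaps a (Suc n) l w) = window_count a (Suc n) w"
      using Suc.IH by auto
    ultimately show ?case
      using img card_Un_disjoint[of "window_heaps a (Suc n) l w" "add_base_piece a ?r ` ?W"]
      unfolding window_heaps_Suc_Suc[OF assms] by simp
  qed
qed

lemma window_count_narrow:
  assumes "w \<le> a"
  shows "window_count a (Suc n) w = w * window_count a n (window_width a 0)"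
  using assms by (induction w) (auto simp: window_width_def)

lemma window_count_wide:
  assumes "0 < a" "a \<le> w"
  shows "window_count a n w = (a * n + w - a) choose n"
  using assms(2)
proof (induction n arbitrary: w)
  case 0
  then show ?case by simp
next
  case (Suc n)
  show ?case
    using Suc.prems
  proof (induction w rule: dec_induct)
    case base
    have "window_count a n (window_width a 0) = (a * n + a - 1) choose n"
      using Suc.IH[of "window_width a 0"] assms(1) by (simp add: window_width_def algebra_simps)
    then have "window_count a (Suc n) a = a * ((a * n + a - 1) choose n)"
      using window_count_narrow[of a a n] by simp
    also have "\<dots> = (a * n + a) choose Suc n"
    proof -
      have "Suc n * ((a * n + a) choose Suc n) = (a * n + a) * ((a * n + a - 1) choose n)"
        by (rule binomial_absorption)
      also have "\<dots> = Suc n * (a * ((a * n + a - 1) choose n))" by (simp add: algebra_simps)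
      finally show ?thesis by (simp only: mult_left_cancel)
    qed
    finally show ?case by (simp add: algebra_simps)
  next
    case (step w)
    have "window_count a (Suc n) (Suc w) = ((a * n + w) choose Suc n) + ((a * n + w) choose n)"
      using step Suc.IH[of "w + a"] by (simp add: window_width_def algebra_simps)
    then show ?case using step.hyps by (simp add: algebra_simps)
  qed
qed

lemma pyramid_iff_base: "pyramid C \<longleftrightarrow> base C = {0}"
proof -
  have "{p \<in> C. snd p = 0} = (\<lambda>s. (s, 0)) ` base C" unfolding base_def by force
  moreover have "(\<lambda>s. (s, 0::nat)) ` B = {(0, 0)} \<longleftrightarrow> B = {0}" for B :: "int set"
    by auto
  ultimately show ?thesis unfolding pyramid_def by simp
qed

lemma pyramids_eq_window_heaps:
  assumes "1 \<le> m"
  shows "{C \<in> heaps a. pyramid C \<and> card C = m} = window_heaps a m 0 1"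
proof (intro equalityI subsetI)
  fix C assume "C \<in> window_heaps a m 0 1"
  then have C: "is_heap a C" "card C = m" "base C \<subseteq> {0}" unfolding window_heaps_def by auto
  then have "base C \<noteq> {}" using is_heap_base_nonempty assms by fastforce
  then show "C \<in> {C \<in> heaps a. pyramid C \<and> card C = m}"
    using C unfolding heaps_iff_is_heap pyramid_iff_base by auto
qed (auto simp: heaps_iff_is_heap pyramid_iff_base window_heaps_def)

theorem theorem1:
  fixes a m :: nat
  assumes "a \<ge> 2" and "m \<ge> 1"
  shows "card {C \<in> heaps a. pyramid C \<and> card C = m} = (a * m - 1) choose (m - 1)"
proof -
  obtain n where m: "m = Suc n" using assms(2) by (cases m) auto
  have a: "0 < a" using assms(1) by simp
  have "card {C \<in> heaps a. pyramid C \<and> card C = m} = window_count a m 1"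
    using card_window_heaps[OF a] pyramids_eq_window_heaps[OF assms(2)] by simp
  also have "\<dots> = window_count a n (2 * a - 1)"
    using window_count_narrow[of 1 a n] a m by (simp add: window_width_def)
  also have "\<dots> = (a * m - 1) choose (m - 1)"
    using window_count_wide[of a "2 * a - 1" n] a m by (simp add: algebra_simps)
  finally show ?thesis .
qed

end
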